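(* Let $m\ge 2$, let $C=uRM(m)$ (defined in the context) with base qubits $b_0,\dots,b_m$ and parity labels $L(q)$. Then $C$ is an $(m-1)$-parity code: for every subset $K\subseteq\{0,\dots,m\}$ with $|K|=m-1$, the number of qubits $q$ with $K\subseteq L(q)$ is even.
   Context: Let $a=\lceil m/2\rceil$, $b=\lfloor m/2\rfloor$. Place $2^m$ bits (qubits) on a grid with $2^b$ rows and $2^a$ columns, positions $(i,j)$, row $1$ on top, column $1$ leftmost. Bulk checks: for $1\le i<2^b$, $1\le j<2^a$, the set $\{(i,j),(i+1,j),(i,j+1),(i+1,j+1)\}$. Boundary checks: for a line of $L=2^n$ positions $1,\dots,L$, each $s\in\{1,\dots,n-1\}$, $w=2^s$, and integer $t$ with $-L/(2w)+1\le t\le L/(2w)-1$, $S(w,t)=\{L/2-w/2+wt,\ L/2-w/2+wt+1,\ L/2+w/2+wt,\ L/2+w/2+wt+1\}$; these with $n=a$ on the top row ($j\mapsto(1,j)$) and with $n=b$ on the leftmost column ($i\mapsto(i,1)$). $C=uRM(m)$ is the set of $x\in\mathbb{F}_2^{2^m}$ with even sum over every check; it has dimension $m+1$. Base qubits are $m+1$ positions $b_0,\dots,b_m$ such that $x\mapsto(x_{b_0},\dots,x_{b_m})$ is a bijection $C\to\mathbb{F}_2^{m+1}$. The parity label of a qubit $q$ is the unique $L(q)\subseteq\{0,\dots,m\}$ with $x_q=\sum_{i\in L(q)}x_{b_i}$ for all $x\in C$. A code with such labels is called $k$-parity if for every $k$-element subset $K$ of the label indices, the number of qubits whose label contains $K$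 is even. *)

theory Defs
  imports Main "HOL-Library.FuncSet"
begin

(* a = ceil(m/2) columns exponent, b = floor(m/2) rows exponent *)
definition colexp :: "nat \<Rightarrow> nat" where "colexp m = (m + 1) div 2"
definition rowexp :: "nat \<Rightarrow> nat" where "rowexp m = m div 2"

definition grid :: "nat \<Rightarrow> (nat \<times> nat) set" where
  "grid m = {1..2 ^ rowexp m} \<times> {1..2 ^ colexp m}"

definition bulk_checks :: "nat \<Rightarrow> (nat \<times> nat) set set" where
  "bulk_checks m = {{(i,j),(i+1,j),(i,j+1),(i+1,j+1)} | i j.
      1 \<le> i \<and> i < 2 ^ rowexp m \<and> 1 \<le> j \<and> j < 2 ^ colexp m}"

definition S_set :: "nat \<Rightarrow> nat \<Rightarrow> int \<Rightarrow> nat set" where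
  "S_set n s t = (let L = (2::int) ^ n; w = (2::int) ^ s in
     nat ` {L div 2 - w div 2 + w * t, L div 2 - w div 2 + w * t + 1,
            L div 2 + w div 2 + w * t, L div 2 + w div 2 + w * t + 1})"

definition line_checks :: "nat \<Rightarrow> nat set set" where
  "line_checks n = {S_set n s t | s t. 1 \<le> s \<and> s \<le> n - 1 \<and>
      - ((2::int) ^ n div (2 * 2 ^ s)) + 1 \<le> t \<and> t \<le> (2::int) ^ n div (2 * 2 ^ s) - 1}"

definition boundary_checks :: "nat \<Rightarrow> (nat \<times> nat) set set" where
  "boundary_checks m =
     ((\<lambda>S. (\<lambda>j. (1::nat, j)) ` S) ` line_checks (colexp m)) \<union>
     ((\<lambda>S. (\<lambda>i. (i, 1::nat)) ` S) ` line_checks (rowexp m))"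

definition checks :: "nat \<Rightarrow> (nat \<times> nat) set set" where
  "checks m = bulk_checks m \<union> boundary_checks m"

(* bit vectors over F_2 = bool, supported on the grid *)
definition uRM :: "nat \<Rightarrow> ((nat \<times> nat) \<Rightarrow> bool) set" where
  "uRM m = {x. (\<forall>q. q \<notin> grid m \<longrightarrow> \<not> x q) \<and>
               (\<forall>S\<in>checks m. even (card {q\<in>S. x q}))}"

definition is_base :: "nat \<Rightarrow> (nat \<Rightarrow> nat \<times> nat) \<Rightarrow> bool" where
  "is_base m bq \<longleftrightarrow> (\<forall>i\<in>{0..m}. bq i \<in> grid m) \<and>
     bij_betw (\<lambda>x. restrict (\<lambda>i. x (bq i)) {0..m}) (uRM m) ({0..m} \<rightarrow>\<^sub>E (UNIV::bool set))"

definition parity_label :: "nat \<Rightarrow> (nat \<Rightarrow> nat \<times> nat) \<Rightarrow> nat \<times> nat \<Rightarrow> nat set" where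
  "parity_label m bq q = (THE L. L \<subseteq> {0..m} \<and>
     (\<forall>x\<in>uRM m. x q = odd (card {i\<in>L. x (bq i)})))"

end

theory Submission
  imports Defs
begin

(* Index the position (i, j) by the m-bit number (i - 1) + 2^b (j - 1).  Every check consists of
   two pairs of positions whose indices differ by the same XOR pattern, so every affine function
   c + <alpha, index> over F_2 satisfies all checks.  There are 2^(m+1) of them, which is also the
   size of uRM(m) because the base qubits give a bijection with F_2^(m+1); hence uRM(m) is the
   first-order Reed-Muller code in this indexing.  The codewords g_j dual to the base qubits are
   therefore affine, and j : L(q), i.e. g_j(q) = 1, is an affine condition on the index of q.
   For |K| = m - 1 < m these conditions have a common nonzero kernel vector u, and XOR-ing the
   index with u pairs up the qubits q with K <= L(q). *)

section \<open>Parities over finite sets\<close>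

definition parity :: "'a set \<Rightarrow> ('a \<Rightarrow> bool) \<Rightarrow> bool" where
  "parity A P \<longleftrightarrow> odd (card {a\<in>A. P a})"

lemma parity_empty [simp]: "parity {} P = False"
  by (simp add: parity_def)

lemma parity_insert [simp]:
  assumes "finite A" "a \<notin> A"
  shows "parity (insert a A) P \<longleftrightarrow> (P a \<noteq> parity A P)"
proof -
  have "{x\<in>insert a A. P x} = (if P a then insert a {x\<in>A. P x} else {x\<in>A. P x})" by auto
  then show ?thesis using assms by (simp add: parity_def)
qed

lemma parity_eq_iff_mem: "parity A (\<lambda>a. a = b) \<longleftrightarrow> b \<in> A"
proof -
  have "{a\<in>A. a = b} = (if b \<in> A then {b} else {})" by auto
  then show ?thesis by (simp add: parity_def)
qed

lemma parity_cong: "(\<And>a. a \<in> A \<Longrightarrow> P a = Q a) \<Longrightarrow> parity A P = parity A Q"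
  unfolding parity_def by (metis (mono_tags, lifting) Collect_cong)

lemma parity_xor:
  "finite A \<Longrightarrow> parity A (\<lambda>a. P a \<noteq> Q a) \<longleftrightarrow> (parity A P \<noteq> parity A Q)"
  by (induction A rule: finite_induct) auto

lemma even_card_involution:
  fixes \<sigma> :: "'a::linorder \<Rightarrow> 'a"
  assumes "finite T" "\<And>z. z \<in> T \<Longrightarrow> \<sigma> z \<in> T" "\<And>z. z \<in> T \<Longrightarrow> \<sigma> z \<noteq> z"
    and "\<And>z. z \<in> T \<Longrightarrow> \<sigma> (\<sigma> z) = z"
  shows "even (card T)"
proof -
  let ?A = "{z\<in>T. z < \<sigma> z}" and ?B = "{z\<in>T. \<sigma> z < z}"
  have T: "T = ?A \<union> ?B" using assms(3) by (auto simp: neq_iff)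
  have "bij_betw \<sigma> ?A ?B"
    by (rule bij_betw_byWitness[where f' = \<sigma>]) (use assms(2,4) in auto)
  then have "card ?A = card ?B" by (rule bij_betw_same_card)
  moreover have "card (?A \<union> ?B) = card ?A + card ?B"
    by (rule card_Un_disjoint) (use assms(1) in auto)
  ultimately have "card T = 2 * card ?A" by (simp only: T[symmetric] mult_2)
  then show ?thesis by simp
qed

lemma xor_less_exp: "a < 2 ^ n \<Longrightarrow> b < 2 ^ n \<Longrightarrow> xor a b < (2::nat) ^ n"
  by (metis take_bit_nat_eq_self_iff take_bit_xor)

lemma bit_add_mult_exp:
  fixes x t :: nat
  assumes "x < 2 ^ n"
  shows "bit (x + 2 ^ n * t) k \<longleftrightarrow> (if k < n then bit x k else bit t (k - n))"
proof (cases "k < n")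
  case True
  have "take_bit n (x + 2 ^ n * t) = x" using assms by (simp add: take_bit_eq_mod)
  then show ?thesis using True bit_take_bit_iff[of n "x + 2 ^ n * t" k] by simp
next
  case False
  have "drop_bit n (x + 2 ^ n * t) = t" using assms by (simp add: drop_bit_eq_div)
  then show ?thesis using False bit_drop_bit_eq[of n "x + 2 ^ n * t"] by (simp add: fun_eq_iff)
qed

lemma xor_add_mult_exp:
  fixes x x' t t' :: nat
  assumes "x < 2 ^ n" "x' < 2 ^ n"
  shows "xor (x + 2 ^ n * t) (x' + 2 ^ n * t') = xor x x' + 2 ^ n * xor t t'"
  by (rule bit_eqI) (simp add: bit_add_mult_exp assms xor_less_exp bit_xor_iff)

lemma xor_pred_eq_mask:
  fixes P :: nat
  assumes "P mod 2 ^ Suc r = 2 ^ r"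
  shows "xor (P - 1) P = mask (Suc r)"
proof -
  define T where "T = P div 2 ^ Suc r"
  have P: "P = 2 ^ r + 2 ^ Suc r * T"
    using assms unfolding T_def by (metis mod_div_mult_eq add.commute mult.commute)
  then have "P - 1 = (2 ^ r - 1) + 2 ^ Suc r * T" by simp
  then have "xor (P - 1) P = xor ((2 ^ r - 1) + 2 ^ Suc r * T) (2 ^ r + 2 ^ Suc r * T)"
    by (simp only: flip: P)
  also have "\<dots> = xor (2 ^ r - 1) (2 ^ r) + 2 ^ Suc r * xor T T"
    by (rule xor_add_mult_exp) (simp_all add: less_imp_diff_less)
  also have "\<dots> = mask (Suc r)"
    unfolding mask_eq_exp_minus_1[symmetric]
    by (rule bit_eqI) (auto simp: bit_xor_iff bit_exp_iff bit_mask_iff)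
  finally show ?thesis .
qed

definition bit_parity :: "nat set \<Rightarrow> nat \<Rightarrow> bool" where
  "bit_parity \<alpha> z \<longleftrightarrow> odd (card {k\<in>\<alpha>. bit z k})"

lemma bit_parity_0 [simp]: "bit_parity \<alpha> 0 = False"
  by (simp add: bit_parity_def)

lemma bit_parity_exp: "bit_parity \<alpha> (2 ^ k) \<longleftrightarrow> k \<in> \<alpha>"
  using parity_eq_iff_mem[of \<alpha> k] by (simp add: bit_parity_def parity_def bit_exp_iff)

lemma bit_parity_xor:
  assumes "finite \<alpha>"
  shows "bit_parity \<alpha> (xor a b) \<longleftrightarrow> (bit_parity \<alpha> a \<noteq> bit_parity \<alpha> b)"
  using parity_xor[OF assms, of "bit a" "bit b"] by (simp add: bit_parity_def parity_def bit_xor_iff)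

lemma exists_common_kernel_vector:
  fixes \<alpha> :: "'i \<Rightarrow> nat set"
  assumes "finite K" "card K < n" "\<And>j. j \<in> K \<Longrightarrow> finite (\<alpha> j)"
  shows "\<exists>u::nat. u \<noteq> 0 \<and> u < 2 ^ n \<and> (\<forall>j\<in>K. \<not> bit_parity (\<alpha> j) u)"
proof -
  define \<phi> where "\<phi> z = restrict (\<lambda>j. bit_parity (\<alpha> j) z) K" for z
  have "\<not> inj_on \<phi> {0..<2 ^ n}"
  proof
    assume "inj_on \<phi> {0..<2 ^ n}"
    then have "card {0..<(2::nat) ^ n} \<le> card (K \<rightarrow>\<^sub>E (UNIV :: bool set))"
      by (rule card_inj_on_le) (auto simp: \<phi>_def assms(1) intro!: finite_PiE)
    then have "(2::nat) ^ n \<le> 2 ^ card K" using assms(1) by (simp add: card_PiE)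
    with assms(2) show False by (simp add: power_le_imp_le_exp)
  qed
  then obtain z1 z2 where z: "z1 < 2 ^ n" "z2 < 2 ^ n" "z1 \<noteq> z2" "\<phi> z1 = \<phi> z2"
    unfolding inj_on_def by auto
  have "xor z1 z2 \<noteq> 0" using z(3) by (metis xor.assoc xor.right_neutral xor_self_eq)
  moreover have "xor z1 z2 < 2 ^ n" using z(1,2) by (rule xor_less_exp)
  moreover have "\<not> bit_parity (\<alpha> j) (xor z1 z2)" if "j \<in> K" for j
  proof -
    have "bit_parity (\<alpha> j) z1 = bit_parity (\<alpha> j) z2"
      using fun_cong[OF z(4), of j] that by (simp add: \<phi>_def)
    then show ?thesis using that assms(3) by (simp add: bit_parity_xor)
  qed
  ultimately show ?thesis by blast
qed

lemma even_card_affine_solutions: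
  fixes c :: "'i \<Rightarrow> bool" and \<alpha> :: "'i \<Rightarrow> nat set"
  assumes "finite K" "card K < n" "\<And>j. j \<in> K \<Longrightarrow> finite (\<alpha> j)"
  shows "even (card {z\<in>{0..<2 ^ n}. \<forall>j\<in>K. c j \<noteq> bit_parity (\<alpha> j) z})"
    (is "even (card ?Z)")
proof -
  obtain u :: nat where u: "u \<noteq> 0" "u < 2 ^ n" "\<And>j. j \<in> K \<Longrightarrow> \<not> bit_parity (\<alpha> j) u"
    using exists_common_kernel_vector[of K n \<alpha>] assms by blast
  show ?thesis
  proof (rule even_card_involution[where \<sigma> = "\<lambda>z. xor z u"])
    show "finite ?Z" by simp
  next
    fix z assume "z \<in> ?Z"
    then show "xor z u \<in> ?Z"
      using u assms(3) by (auto simp add: xor_less_exp bit_parity_xor)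
  next
    fix z
    show "xor z u \<noteq> z"
    proof
      assume "xor z u = z"
      then have "xor z (xor z u) = 0" by simp
      with u(1) show False by (simp flip: xor.assoc)
    qed
    show "xor (xor z u) u = z" by (simp add: xor.assoc)
  qed
qed

section \<open>Binary indexing of the grid\<close>

lemma exp_rowexp_mult_exp_colexp: "2 ^ rowexp m * 2 ^ colexp m = (2::nat) ^ m"
proof -
  have "rowexp m + colexp m = m" unfolding rowexp_def colexp_def by presburger
  then show ?thesis by (simp flip: power_add)
qed

definition grid_index :: "nat \<Rightarrow> nat \<times> nat \<Rightarrow> nat" where
  "grid_index m q = (fst q - 1) + 2 ^ rowexp m * (snd q - 1)"

definition grid_point :: "nat \<Rightarrow> nat \<Rightarrow> nat \<times> nat" where
  "grid_point m z = (z mod 2 ^ rowexp m + 1, z div 2 ^ rowexp m + 1)"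

lemma grid_point_in_grid:
  assumes "z < 2 ^ m"
  shows "grid_point m z \<in> grid m" "grid_index m (grid_point m z) = z"
proof -
  have "z < 2 ^ colexp m * 2 ^ rowexp m"
    using assms exp_rowexp_mult_exp_colexp[of m] by (simp only: mult.commute)
  then have "z div 2 ^ rowexp m < 2 ^ colexp m" by (rule less_mult_imp_div_less)
  then show "grid_point m z \<in> grid m" by (simp add: grid_point_def grid_def Suc_le_eq)
  show "grid_index m (grid_point m z) = z" by (simp add: grid_point_def grid_index_def)
qed

lemma grid_index_less:
  assumes "q \<in> grid m"
  shows "grid_index m q < 2 ^ m" "grid_point m (grid_index m q) = q"
proof -
  obtain x y where q: "q = (Suc x, Suc y)" "x < 2 ^ rowexp m" "y < 2 ^ colexp m"
  proof -
    obtain i j where "q = (i, j)" "1 \<le> i" "i \<le> 2 ^ rowexp m" "1 \<le> j" "j \<le> 2 ^ colexp m"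
      using assms unfolding grid_def by auto
    then show ?thesis using that[of "i - 1" "j - 1"] by simp
  qed
  have "x + 2 ^ rowexp m * y < 2 ^ rowexp m * Suc y" using q(2) by simp
  also have "\<dots> \<le> 2 ^ rowexp m * 2 ^ colexp m" using q(3) by (intro mult_le_mono2) simp
  finally show "grid_index m q < 2 ^ m" by (simp add: q(1) grid_index_def exp_rowexp_mult_exp_colexp)
  show "grid_point m (grid_index m q) = q" using q by (simp add: grid_point_def grid_index_def)
qed

lemma card_grid_filter_index:
  "card {q\<in>grid m. P (grid_index m q)} = card {z\<in>{0..<2 ^ m}. P z}"
proof (rule bij_betw_same_card)
  show "bij_betw (grid_index m) {q\<in>grid m. P (grid_index m q)} {z\<in>{0..<2 ^ m}. P z}"
  proof (rule bij_betw_byWitness[where f' = "grid_point m"])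
    show "\<forall>q\<in>{q\<in>grid m. P (grid_index m q)}. grid_point m (grid_index m q) = q"
      using grid_index_less(2) by blast
    show "\<forall>z\<in>{z\<in>{0..<2 ^ m}. P z}. grid_index m (grid_point m z) = z"
      using grid_point_in_grid(2) by auto
    show "grid_index m ` {q\<in>grid m. P (grid_index m q)} \<subseteq> {z\<in>{0..<2 ^ m}. P z}"
      using grid_index_less(1) by auto
    show "grid_point m ` {z\<in>{0..<2 ^ m}. P z} \<subseteq> {q\<in>grid m. P (grid_index m q)}"
      using grid_point_in_grid by auto
  qed
qed

lemma grid_index_bound:
  "(i, j) \<in> grid m \<Longrightarrow> i - 1 < 2 ^ rowexp m"
  by (auto simp: grid_def)

lemma xor_grid_index_same_column:
  assumes "(i, j) \<in> grid m" "(i', j) \<in> grid m"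
  shows "xor (grid_index m (i, j)) (grid_index m (i', j)) = xor (i - 1) (i' - 1)"
  using xor_add_mult_exp[OF grid_index_bound[OF assms(1)] grid_index_bound[OF assms(2)]]
  by (simp add: grid_index_def)

lemma xor_grid_index_same_row:
  assumes "(i, j) \<in> grid m" "(i, j') \<in> grid m"
  shows "xor (grid_index m (i, j)) (grid_index m (i, j')) = 2 ^ rowexp m * xor (j - 1) (j' - 1)"
  using xor_add_mult_exp[OF grid_index_bound[OF assms(1)] grid_index_bound[OF assms(2)]]
  by (simp add: grid_index_def)

section \<open>The code is the first-order Reed-Muller code\<close>

definition affine_word :: "nat \<Rightarrow> bool \<Rightarrow> nat set \<Rightarrow> nat \<times> nat \<Rightarrow> bool" where
  "affine_word m c \<alpha> q \<longleftrightarrow> q \<in> grid m \<and> (c \<noteq> bit_parity \<alpha> (grid_index m q))"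

lemma even_affine_word_on_quadruple:
  assumes "finite \<alpha>" "distinct [p1, p2, p3, p4]" "{p1, p2, p3, p4} \<subseteq> grid m"
    and "xor (grid_index m p1) (grid_index m p2) = xor (grid_index m p3) (grid_index m p4)"
  shows "even (card {q\<in>{p1, p2, p3, p4}. affine_word m c \<alpha> q})"
proof -
  have "(bit_parity \<alpha> (grid_index m p1) \<noteq> bit_parity \<alpha> (grid_index m p2))
      = (bit_parity \<alpha> (grid_index m p3) \<noteq> bit_parity \<alpha> (grid_index m p4))"
    using arg_cong[OF assms(4), of "bit_parity \<alpha>"] unfolding bit_parity_xor[OF assms(1)] .
  then have "\<not> parity {p1, p2, p3, p4} (affine_word m c \<alpha>)"
    using assms(2,3) by (auto simp: affine_word_def)
  then show ?thesis by (simp add: parity_def)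
qed

lemma S_set_eq:
  assumes "1 \<le> s" "s \<le> n - 1"
    and "- ((2::int) ^ n div (2 * 2 ^ s)) + 1 \<le> t" "t \<le> (2::int) ^ n div (2 * 2 ^ s) - 1"
  obtains r P where "P mod 2 ^ Suc r = 2 ^ r" "P + 2 ^ Suc r + 1 \<le> 2 ^ n"
    and "S_set n s t = {P, P + 1, P + 2 ^ Suc r, P + 2 ^ Suc r + 1}"
proof -
  obtain r where s: "s = Suc r" using assms(1) by (cases s) auto
  define e where "e = n - Suc (Suc r)"
  have n: "n = Suc (Suc (r + e))" using assms(2) unfolding s e_def by arith
  define U V where "U = (2::int) ^ r" and "V = (2::int) ^ e"
  have UV: "U \<ge> 1" "V \<ge> 1" unfolding U_def V_def by simp_all
  have "(2::int) ^ n = 4 * U * V" unfolding n U_def V_def by (simp add: power_add)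
  then have divs: "(2::int) ^ n div 2 = 2 * U * V" "(2::int) ^ s div 2 = U" "(2::int) ^ s = 2 * U"
    "(2::int) ^ n div (2 * 2 ^ s) = V"
    unfolding s U_def by simp_all
  have t: "1 - V \<le> t" "t \<le> V - 1" using assms(3,4) unfolding divs(4) by linarith+
  define T where "T = nat (t + V - 1)"
  have T: "int T = t + V - 1" "int T \<le> 2 * V - 2"
    using t unfolding T_def by simp_all
  define P where "P = (2::nat) ^ r + 2 ^ Suc r * T"
  have iP: "int P = U + 2 * U * int T" unfolding P_def U_def by simp
  then have P: "2 * U * V - U + 2 * U * t = int P" unfolding T(1) by (simp add: algebra_simps)
  show ?thesis
  proof
    show "P mod 2 ^ Suc r = 2 ^ r" unfolding P_def by simp
    have "2 * U * (int T + 1) \<le> 2 * U * (2 * V - 1)"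
      using T(2) UV by (intro mult_left_mono) auto
    then have "int P + 2 * U + 1 \<le> 4 * U * V"
      using UV iP by (simp add: algebra_simps)
    then have "int (P + 2 ^ Suc r + 1) \<le> int (2 ^ n)"
      using \<open>(2::int) ^ n = 4 * U * V\<close> unfolding U_def by simp
    then show "P + 2 ^ Suc r + 1 \<le> 2 ^ n" by (simp only: of_nat_le_iff)
    have "2 * U * V + U + 2 * U * t = int (P + 2 ^ Suc r)" using P unfolding U_def by simp
    then have "S_set n s t = nat ` {int P, int (P + 1), int (P + 2 ^ Suc r), int (P + 2 ^ Suc r + 1)}"
      unfolding S_set_def Let_def divs using P by (simp add: algebra_simps)
    then show "S_set n s t = {P, P + 1, P + 2 ^ Suc r, P + 2 ^ Suc r + 1}"
      by (simp only: image_insert image_empty nat_int)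
  qed
qed

(* In 0-based indices both pairs of S(w, t) have the form x, x + 1 with x = w/2 - 1 mod w,
   so both XOR to the carry mask w - 1. *)
lemma xor_line_check:
  fixes P :: nat
  assumes "P mod 2 ^ Suc r = 2 ^ r"
  shows "xor (P - 1) (P + 1 - 1) = xor (P + 2 ^ Suc r - 1) (P + 2 ^ Suc r + 1 - 1)"
proof -
  have "(P + 2 ^ Suc r) mod 2 ^ Suc r = 2 ^ r" using assms by simp
  then show ?thesis using xor_pred_eq_mask[OF assms] xor_pred_eq_mask[of "P + 2 ^ Suc r" r] by simp
qed

lemma even_affine_word_on_bulk_check:
  assumes "finite \<alpha>" "S \<in> bulk_checks m"
  shows "even (card {q\<in>S. affine_word m c \<alpha> q})"
proof -
  obtain i j where S: "S = {(i, j), (i + 1, j), (i, j + 1), (i + 1, j + 1)}"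
    and ij: "1 \<le> i" "i < 2 ^ rowexp m" "1 \<le> j" "j < 2 ^ colexp m"
    using assms(2) unfolding bulk_checks_def by blast
  have grid: "{(i, j), (i + 1, j), (i, j + 1), (i + 1, j + 1)} \<subseteq> grid m"
    using ij by (auto simp: grid_def)
  show ?thesis unfolding S
  proof (rule even_affine_word_on_quadruple[OF assms(1) _ grid])
    show "xor (grid_index m (i, j)) (grid_index m (i + 1, j))
        = xor (grid_index m (i, j + 1)) (grid_index m (i + 1, j + 1))"
      using grid by (simp add: xor_grid_index_same_column)
  qed simp
qed

lemma even_affine_word_on_boundary_check:
  assumes "finite \<alpha>" "S \<in> boundary_checks m"
  shows "even (card {q\<in>S. affine_word m c \<alpha> q})"
proof -
  have line: "\<exists>r P. P mod 2 ^ Suc r = 2 ^ r \<and> P + 2 ^ Suc r + 1 \<le> 2 ^ n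
      \<and> L = {P, P + 1, P + 2 ^ Suc r, P + 2 ^ Suc r + 1}" if L: "L \<in> line_checks n" for L n
  proof -
    obtain s t where "L = S_set n s t" "1 \<le> s" "s \<le> n - 1"
      "- ((2::int) ^ n div (2 * 2 ^ s)) + 1 \<le> t" "t \<le> (2::int) ^ n div (2 * 2 ^ s) - 1"
      using L unfolding line_checks_def by blast
    then show ?thesis using S_set_eq by metis
  qed
  have pos: "1 \<le> P" if "P mod 2 ^ Suc r = 2 ^ r" for P r :: nat
    using that by (cases P) simp_all
  from assms(2) consider (top) L where "L \<in> line_checks (colexp m)" "S = (\<lambda>j. (1, j)) ` L"
    | (left) L where "L \<in> line_checks (rowexp m)" "S = (\<lambda>i. (i, 1)) ` L"
    unfolding boundary_checks_def by blast
  then show ?thesis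
  proof cases
    case top
    obtain r P where P: "P mod 2 ^ Suc r = 2 ^ r" "P + 2 ^ Suc r + 1 \<le> 2 ^ colexp m"
      and L: "L = {P, P + 1, P + 2 ^ Suc r, P + 2 ^ Suc r + 1}"
      using line[OF top(1)] by blast
    have S: "S = {(1, P), (1, P + 1), (1, P + 2 ^ Suc r), (1, P + 2 ^ Suc r + 1)}"
      unfolding top(2) L by simp
    have grid: "{(1, P), (1, P + 1), (1, P + 2 ^ Suc r), (1, P + 2 ^ Suc r + 1)} \<subseteq> grid m"
      using P pos[OF P(1)] by (auto simp: grid_def)
    show ?thesis unfolding S
    proof (rule even_affine_word_on_quadruple[OF assms(1) _ grid])
      show "xor (grid_index m (1, P)) (grid_index m (1, P + 1))
          = xor (grid_index m (1, P + 2 ^ Suc r)) (grid_index m (1, P + 2 ^ Suc r + 1))"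
        using grid xor_line_check[OF P(1)] by (simp add: xor_grid_index_same_row)
    qed simp
  next
    case left
    obtain r P where P: "P mod 2 ^ Suc r = 2 ^ r" "P + 2 ^ Suc r + 1 \<le> 2 ^ rowexp m"
      and L: "L = {P, P + 1, P + 2 ^ Suc r, P + 2 ^ Suc r + 1}"
      using line[OF left(1)] by blast
    have S: "S = {(P, 1), (P + 1, 1), (P + 2 ^ Suc r, 1), (P + 2 ^ Suc r + 1, 1)}"
      unfolding left(2) L by simp
    have grid: "{(P, 1), (P + 1, 1), (P + 2 ^ Suc r, 1), (P + 2 ^ Suc r + 1, 1)} \<subseteq> grid m"
      using P pos[OF P(1)] by (auto simp: grid_def)
    show ?thesis unfolding S
    proof (rule even_affine_word_on_quadruple[OF assms(1) _ grid])
      show "xor (grid_index m (P, 1)) (grid_index m (P + 1, 1))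
          = xor (grid_index m (P + 2 ^ Suc r, 1)) (grid_index m (P + 2 ^ Suc r + 1, 1))"
        using grid xor_line_check[OF P(1)] by (simp add: xor_grid_index_same_column)
    qed simp
  qed
qed

lemma affine_word_in_uRM:
  assumes "finite \<alpha>"
  shows "affine_word m c \<alpha> \<in> uRM m"
  using even_affine_word_on_bulk_check[OF assms] even_affine_word_on_boundary_check[OF assms]
  unfolding uRM_def checks_def by (auto simp: affine_word_def)

definition affine_words :: "nat \<Rightarrow> (nat \<times> nat \<Rightarrow> bool) set" where
  "affine_words m = (\<lambda>(c, \<alpha>). affine_word m c \<alpha>) ` (UNIV \<times> Pow {0..<m})"

lemma affine_word_grid_point:
  "z < 2 ^ m \<Longrightarrow> affine_word m c \<alpha> (grid_point m z) \<longleftrightarrow> (c \<noteq> bit_parity \<alpha> z)"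
  by (simp add: affine_word_def grid_point_in_grid)

lemma inj_on_affine_word: "inj_on (\<lambda>(c, \<alpha>). affine_word m c \<alpha>) (UNIV \<times> Pow {0..<m})"
proof (rule inj_onI, clarsimp)
  fix c c' \<alpha> \<alpha>' assume \<alpha>: "\<alpha> \<subseteq> {0..<m}" "\<alpha>' \<subseteq> {0..<m}"
    and eq: "affine_word m c \<alpha> = affine_word m c' \<alpha>'"
  have eq_at: "(c \<noteq> bit_parity \<alpha> z) = (c' \<noteq> bit_parity \<alpha>' z)" if "z < 2 ^ m" for z
    using fun_cong[OF eq, of "grid_point m z"] that by (simp add: affine_word_grid_point)
  from eq_at[of 0] have "c = c'" by simp
  moreover have "k \<in> \<alpha> \<longleftrightarrow> k \<in> \<alpha>'" for k
  proof (cases "k < m")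
    case True
    then show ?thesis using eq_at[of "2 ^ k"] \<open>c = c'\<close> by (cases c) (simp_all add: bit_parity_exp)
  qed (use \<alpha> in auto)
  ultimately show "c = c' \<and> \<alpha> = \<alpha>'" by auto
qed

lemma card_affine_words: "card (affine_words m) = 2 ^ Suc m"
  unfolding affine_words_def
  by (simp add: card_image[OF inj_on_affine_word] card_cartesian_product card_Pow)

lemma finite_check: "S \<in> checks m \<Longrightarrow> finite S"
  unfolding checks_def bulk_checks_def boundary_checks_def line_checks_def S_set_def Let_def
  by auto

lemma uRM_xor:
  assumes "x \<in> uRM m" "y \<in> uRM m"
  shows "(\<lambda>q. x q \<noteq> y q) \<in> uRM m"
proof -
  have "parity S (\<lambda>q. x q \<noteq> y q) \<longleftrightarrow> parity S x \<noteq> parity S y" if "S \<in> checks m" for S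
    using parity_xor[OF finite_check[OF that]] .
  then show ?thesis using assms unfolding uRM_def parity_def by auto
qed

lemma uRM_parity_sum:
  assumes "finite J" "\<And>j. j \<in> J \<Longrightarrow> g j \<in> uRM m"
  shows "(\<lambda>q. parity J (\<lambda>j. g j q)) \<in> uRM m"
  using assms
proof (induction J rule: finite_induct)
  case empty
  then show ?case by (simp add: uRM_def)
next
  case (insert a J)
  then show ?case using uRM_xor[of "g a" m] by simp
qed

lemma card_uRM: "is_base m bq \<Longrightarrow> card (uRM m) = 2 ^ Suc m"
  unfolding is_base_def by (auto dest!: bij_betw_same_card simp: card_PiE)

lemma uRM_eq_affine_words:
  assumes "is_base m bq"
  shows "uRM m = affine_words m"
proof -
  have "affine_words m \<subseteq> uRM m"
    unfolding affine_words_def by (auto intro: affine_word_in_uRM finite_subset)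
  moreover have "finite (uRM m)" using card_uRM[OF assms] by (intro card_ge_0_finite) simp
  ultimately show ?thesis
    using card_subset_eq card_uRM[OF assms] card_affine_words by metis
qed

section \<open>Parity labels\<close>

lemma uRM_eq_if_eq_on_base:
  assumes "is_base m bq" "x \<in> uRM m" "y \<in> uRM m" "\<And>i. i \<le> m \<Longrightarrow> x (bq i) = y (bq i)"
  shows "x = y"
proof -
  have "restrict (\<lambda>i. x (bq i)) {0..m} = restrict (\<lambda>i. y (bq i)) {0..m}"
    using assms(4) by (intro restrict_ext) simp
  then show ?thesis using assms(1-3) unfolding is_base_def bij_betw_def by (auto dest: inj_onD)
qed

lemma is_base_dual_basis:
  assumes "is_base m bq"
  obtains g where "\<And>j. j \<le> m \<Longrightarrow> g j \<in> uRM m"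
    and "\<And>i j. i \<le> m \<Longrightarrow> j \<le> m \<Longrightarrow> g j (bq i) \<longleftrightarrow> i = j"
proof
  let ?r = "\<lambda>x. restrict (\<lambda>i. x (bq i)) {0..m}" and ?e = "\<lambda>j. restrict (\<lambda>i. i = j) {0..m}"
  have bij: "bij_betw ?r (uRM m) ({0..m} \<rightarrow>\<^sub>E UNIV)" using assms unfolding is_base_def by blast
  have e: "?e j \<in> {0..m} \<rightarrow>\<^sub>E UNIV" for j by simp
  show "inv_into (uRM m) ?r (?e j) \<in> uRM m" for j
    using bij_betwE[OF bij_betw_inv_into[OF bij]] e by blast
  show "inv_into (uRM m) ?r (?e j) (bq i) \<longleftrightarrow> i = j" if "i \<le> m" for i j
    using fun_cong[OF bij_betw_inv_into_right[OF bij e[of j]], of i] that by simp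
qed

lemma uRM_expansion:
  assumes "is_base m bq" "\<And>j. j \<le> m \<Longrightarrow> g j \<in> uRM m"
    and "\<And>i j. i \<le> m \<Longrightarrow> j \<le> m \<Longrightarrow> g j (bq i) \<longleftrightarrow> i = j"
    and "x \<in> uRM m"
  shows "x q = parity {j\<in>{0..m}. x (bq j)} (\<lambda>j. g j q)"
proof -
  let ?J = "{j\<in>{0..m}. x (bq j)}"
  have "(\<lambda>q. parity ?J (\<lambda>j. g j q)) \<in> uRM m" by (rule uRM_parity_sum) (auto simp: assms(2))
  moreover have "parity ?J (\<lambda>j. g j (bq i)) = x (bq i)" if "i \<le> m" for i
  proof -
    have "parity ?J (\<lambda>j. g j (bq i)) = parity ?J (\<lambda>j. j = i)"
      using assms(3) that by (intro parity_cong) auto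
    then show ?thesis using that by (simp add: parity_eq_iff_mem)
  qed
  ultimately have "x = (\<lambda>q. parity ?J (\<lambda>j. g j q))"
    by (intro uRM_eq_if_eq_on_base[OF assms(1,4)]) auto
  then show ?thesis by (rule fun_cong)
qed

lemma parity_label_eq:
  assumes "is_base m bq" "\<And>j. j \<le> m \<Longrightarrow> g j \<in> uRM m"
    and "\<And>i j. i \<le> m \<Longrightarrow> j \<le> m \<Longrightarrow> g j (bq i) \<longleftrightarrow> i = j"
  shows "parity_label m bq q = {j\<in>{0..m}. g j q}"
  unfolding parity_label_def
proof (rule the_equality)
  have "x q = odd (card {i\<in>{j\<in>{0..m}. g j q}. x (bq i)})" if "x \<in> uRM m" for x
  proof -
    have "{i\<in>{j\<in>{0..m}. g j q}. x (bq i)} = {j\<in>{j\<in>{0..m}. x (bq j)}. g j q}" by auto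
    then show ?thesis using uRM_expansion[OF assms that, of q] by (simp add: parity_def)
  qed
  then show "{j\<in>{0..m}. g j q} \<subseteq> {0..m}
      \<and> (\<forall>x\<in>uRM m. x q = odd (card {i\<in>{j\<in>{0..m}. g j q}. x (bq i)}))"
    by auto
next
  fix L assume L: "L \<subseteq> {0..m} \<and> (\<forall>x\<in>uRM m. x q = odd (card {i\<in>L. x (bq i)}))"
  have "g j q \<longleftrightarrow> j \<in> L" if "j \<le> m" for j
  proof -
    have "g j q = parity L (\<lambda>i. g j (bq i))"
      using L assms(2)[OF that] unfolding parity_def by blast
    also have "\<dots> = parity L (\<lambda>i. i = j)" using L assms(3) that by (intro parity_cong) auto
    finally show ?thesis by (simp add: parity_eq_iff_mem)
  qed
  then show "L = {j\<in>{0..m}. g j q}" using L by auto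
qed

lemma parity_label_affine:
  assumes "is_base m bq"
  obtains \<alpha> c where "\<And>j. j \<le> m \<Longrightarrow> \<alpha> j \<subseteq> {0..<m}"
    and "\<And>q j. q \<in> grid m \<Longrightarrow> j \<le> m \<Longrightarrow>
      j \<in> parity_label m bq q \<longleftrightarrow> c j \<noteq> bit_parity (\<alpha> j) (grid_index m q)"
proof -
  obtain g where g: "\<And>j. j \<le> m \<Longrightarrow> g j \<in> uRM m"
    "\<And>i j. i \<le> m \<Longrightarrow> j \<le> m \<Longrightarrow> g j (bq i) \<longleftrightarrow> i = j"
    using is_base_dual_basis[OF assms] by blast
  have "\<forall>j\<in>{..m}. \<exists>p. snd p \<subseteq> {0..<m} \<and> g j = affine_word m (fst p) (snd p)"
  proof
    fix j assume "j \<in> {..m}"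
    then have "g j \<in> affine_words m" using g(1) uRM_eq_affine_words[OF assms] by auto
    then show "\<exists>p. snd p \<subseteq> {0..<m} \<and> g j = affine_word m (fst p) (snd p)"
      unfolding affine_words_def by auto
  qed
  then obtain p where p: "\<And>j. j \<le> m \<Longrightarrow> snd (p j) \<subseteq> {0..<m}"
    "\<And>j. j \<le> m \<Longrightarrow> g j = affine_word m (fst (p j)) (snd (p j))"
    by (metis atMost_iff bchoice)
  show ?thesis
  proof (rule that[of "snd \<circ> p" "fst \<circ> p"])
    show "(snd \<circ> p) j \<subseteq> {0..<m}" if "j \<le> m" for j using p(1)[OF that] by simp
    show "j \<in> parity_label m bq q \<longleftrightarrow> (fst \<circ> p) j \<noteq> bit_parity ((snd \<circ> p) j) (grid_index m q)"
      if "q \<in> grid m" "j \<le> m" for q j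
      using parity_label_eq[OF assms g(1) g(2), of q] p(2)[OF that(2)] that
      by (simp add: affine_word_def)
  qed
qed

theorem lemma5:
  fixes m :: nat and bq :: "nat \<Rightarrow> nat \<times> nat" and K :: "nat set"
  assumes "m \<ge> 2"
    and "is_base m bq"
    and "K \<subseteq> {0..m}" and "card K = m - 1"
  shows "even (card {q \<in> grid m. K \<subseteq> parity_label m bq q})"
proof -
  obtain \<alpha> c where \<alpha>: "\<And>j. j \<le> m \<Longrightarrow> \<alpha> j \<subseteq> {0..<m}"
    and label: "\<And>q j. q \<in> grid m \<Longrightarrow> j \<le> m \<Longrightarrow>
      j \<in> parity_label m bq q \<longleftrightarrow> c j \<noteq> bit_parity (\<alpha> j) (grid_index m q)"
    by (rule parity_label_affine[OF assms(2)]) (rule that)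
  have K: "finite K" "\<And>j. j \<in> K \<Longrightarrow> j \<le> m" using assms(3) finite_subset by auto
  have even: "even (card {z\<in>{0..<2 ^ m}. \<forall>j\<in>K. c j \<noteq> bit_parity (\<alpha> j) z})"
  proof (rule even_card_affine_solutions)
    show "card K < m" using assms(1,4) by simp
    show "finite (\<alpha> j)" if "j \<in> K" for j using \<alpha>[OF K(2)[OF that]] by (rule finite_subset) simp
  qed (rule K(1))
  have "card {q\<in>grid m. K \<subseteq> parity_label m bq q}
      = card {q\<in>grid m. \<forall>j\<in>K. c j \<noteq> bit_parity (\<alpha> j) (grid_index m q)}"
    by (rule arg_cong[where f = card]) (auto simp: subset_iff label K(2))
  also have "\<dots> = card {z\<in>{0..<2 ^ m}. \<forall>j\<in>K. c j \<noteq> bit_parity (\<alpha> j) z}"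
    by (rule card_grid_filter_index)
  finally show ?thesis using even by simp
qed

end
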